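(* For each positive integer $N$, let $$f^{(2)}(N)=\{\, y\in\mathbb{R} \;:\; y\equiv \sqrt{2n} \pmod 1 \text{ for some } n\in\mathbb{N},\ 2n\le N,\ \sqrt{2n}\notin\mathbb{N}\,\},$$ the set of fractional parts of $\sqrt{2n}$ (for $2n\le N$ not a perfect square), extended periodically with period $1$. For a set $A\subset\mathbb{R}$ and $x\in\mathbb{R}$ define $$\operatorname{gap}_x(A)=\inf\{y\in A: y>x\}-\sup\{y\in A: y<x\},$$ and set $G^{(2)}(x)=\lim_{N\to\infty}2\sqrt{N}\,\operatorname{gap}_x(f^{(2)}(N))$. Then for coprime integers $p,q$ with $q\ge 2$, $$G^{(2)}\!\left(\tfrac{p}{q}\right)=\begin{cases}\frac{4}{q} & q\equiv 2 \pmod 4,\\ \frac{2}{q} & q\equiv 0 \pmod 4,\\ \frac{1}{q} & q\equiv 1 \pmod 2.\end{cases}$$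
   Context: $\mathbb{N}$ denotes the positive integers. The fractional part of a real number $t$ is $t-\lfloor t\rfloor$. *)

theory Defs
  imports Complex_Main
begin

definition f2 :: "nat \<Rightarrow> real set" where
  "f2 N = {y. \<exists>n::nat. n \<ge> 1 \<and> 2 * n \<le> N \<and> sqrt (real (2 * n)) \<notin> \<nat> \<and>
                  y - sqrt (real (2 * n)) \<in> \<int>}"

definition gap :: "real \<Rightarrow> real set \<Rightarrow> real" where
  "gap x A = Inf {y \<in> A. y > x} - Sup {y \<in> A. y < x}"

end

theory Submission
  imports Defs "HOL-Number_Theory.Cong" "HOL-Real_Asymp.Real_Asymp"
begin

(* A point of f2 N is sqrt(2n) - r/q with r = p + kq, and
   sqrt(2n) - r/q = a / (q^2 (sqrt(2n) + r/q)) where a = 2nq^2 - r^2.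
   As k varies, (p + kq)^2 mod 2q^2 runs through exactly the residue class of p^2 modulo q l,
   where l = gap_factor q. So a is always congruent to -p^2 modulo q l, never 0, and the
   admissible values nearest to 0 on either side, (-p^2) mod q l and -(p^2 mod q l), are attained
   with r close to q sqrt N. Their absolute values add up to q l, so the gap around x is
   q l / (2 q^2 sqrt N) (1 + o(1)) = l / (2 q sqrt N) (1 + o(1)). *)

definition gap_factor :: "int \<Rightarrow> int" where
  "gap_factor q = (if q mod 4 = 2 then 4 else if q mod 4 = 0 then 2 else 1)"

lemma gap_factor_dvd_double: "gap_factor q dvd 2 * q"
  unfolding gap_factor_def by (auto; presburger)

lemma q_gap_factor_bounds:
  fixes q :: int
  assumes "0 < q"
  shows "0 < q * gap_factor q" and "q * gap_factor q \<le> 4 * q"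
  using assms by (simp_all add: gap_factor_def)

lemma odd_if_coprime_even:
  fixes p q :: int
  assumes "coprime p q" and "even q"
  shows "odd p"
  using assms coprime_common_divisor[of p q 2] by auto

lemma gap_factor_dvd_quadratic:
  fixes p q k :: int
  assumes "coprime p q"
  shows "gap_factor q dvd k * (2*p + q*k)"
proof -
  have "q mod 4 = 2 \<or> q mod 4 = 0 \<or> odd q" by presburger
  then consider (two) "q mod 4 = 2" | (zero) "q mod 4 = 0" | (odd) "odd q" by blast
  then show ?thesis
  proof cases
    case two
    define h where "h = q div 2"
    have h: "q = 2*h" "odd h" using two unfolding h_def by presburger+
    have "odd p" using odd_if_coprime_even[OF assms] h by simp
    then have "even (k * (p + h*k))" using h by (cases "even k") auto
    then obtain c where c: "k * (p + h*k) = 2 * c" by blast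
    have "k * (2*p + q*k) = 2 * (k * (p + h*k))" using h by (simp add: algebra_simps)
    also have "\<dots> = 4 * c" using c by simp
    finally show ?thesis using two by (simp add: gap_factor_def)
  next
    case zero
    then have "even q" by presburger
    then show ?thesis using zero by (simp add: gap_factor_def)
  next
    case odd
    then show ?thesis by (auto simp: gap_factor_def; presburger)
  qed
qed

lemma cong_solvable_coprime:
  fixes a m c :: int
  assumes "coprime a m"
  shows "\<exists>j. [a * j = c] (mod m)"
proof -
  obtain x where "[a * x = 1] (mod m)" using cong_solve_coprime_int[OF assms] by blast
  then have "[a * (x * c) = c] (mod m)" using cong_scalar_right[of "a * x" 1 m c] by (simp add: mult.assoc)
  then show ?thesis by blast
qed

(* Take k = 2j + e: k (2p + qk) = e (2p + qe) + 4pj + 4q (j^2 + je), and p is invertible mod q. *)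
lemma quadratic_cong_solvable_of_4_dvd:
  fixes p q e v :: int
  assumes "coprime p q" and "4 dvd e * (2*p + q*e) - v"
  shows "\<exists>k. [k * (2*p + q*k) = v] (mod 2*q)"
proof -
  obtain c where c: "e * (2*p + q*e) - v = 4 * c" using assms(2) by blast
  obtain j where "[p * j = - c] (mod q)" using cong_solvable_coprime[OF assms(1)] by blast
  then have "q dvd c + p * j" by (simp add: cong_iff_dvd_diff add.commute)
  then have "2 * q dvd 4 * (c + p * j)" by (rule mult_dvd_mono[rotated]) simp
  moreover have "(2*j + e) * (2*p + q*(2*j + e)) - v = 4 * (c + p*j) + 2*q * (2*j*j + 2*j*e)"
    using c by (simp add: algebra_simps)
  ultimately have "[(2*j + e) * (2*p + q*(2*j + e)) = v] (mod 2*q)"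
    by (simp add: cong_iff_dvd_diff)
  then show ?thesis by blast
qed

lemma gap_factor_quadratic_cong_solvable:
  fixes p q w :: int
  assumes "coprime p q"
  shows "\<exists>k. [k * (2*p + q*k) = gap_factor q * w] (mod 2*q)"
proof -
  have "q mod 4 = 2 \<or> q mod 4 = 0 \<or> odd q" by presburger
  then consider (two) "q mod 4 = 2" | (zero) "q mod 4 = 0" | (odd) "odd q" by blast
  then show ?thesis
  proof cases
    case two
    then have "4 dvd 0 * (2*p + q*0) - gap_factor q * w" by (simp add: gap_factor_def)
    then show ?thesis using quadratic_cong_solvable_of_4_dvd[OF assms] by blast
  next
    case zero
    then have "odd p" using odd_if_coprime_even[OF assms] by presburger
    show ?thesis
    proof (cases "even w")
      case True
      then have "4 dvd 0 * (2*p + q*0) - gap_factor q * w"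
        using zero by (simp add: gap_factor_def; presburger)
      then show ?thesis using quadratic_cong_solvable_of_4_dvd[OF assms] by blast
    next
      case False
      then have "4 dvd 1 * (2*p + q*1) - gap_factor q * w"
        using zero \<open>odd p\<close> by (simp add: gap_factor_def; presburger)
      then show ?thesis using quadratic_cong_solvable_of_4_dvd[OF assms] by blast
    qed
  next
    case odd
    have "coprime (2*p) q" using assms odd by simp
    then have "coprime (2*p + q) q" by (simp add: coprime_iff_gcd_eq_1)
    then have "coprime (2*p + q) (2*q)" using odd by simp
    then obtain k where k: "[(2*p + q) * k = w] (mod 2*q)" using cong_solvable_coprime by blast
    have "even (k * (k - 1))" by simp
    then have "2*q dvd q * (k * (k - 1))" by simp
    moreover have "k * (2*p + q*k) = (2*p + q) * k + q * (k * (k - 1))" by (simp add: algebra_simps)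
    ultimately have "[k * (2*p + q*k) = (2*p + q) * k] (mod 2*q)" by (simp add: cong_iff_dvd_diff)
    moreover have "gap_factor q = 1" using odd unfolding gap_factor_def by presburger
    ultimately show ?thesis using k by (auto intro: cong_trans)
  qed
qed

lemma diff_square_cong_mod_q_gap_factor:
  fixes p q n m :: int
  assumes "coprime p q"
  shows "[2*n*q^2 - (p + m*q)^2 = - (p^2)] (mod q * gap_factor q)"
proof -
  have "q * gap_factor q dvd q * (2*q)" using gap_factor_dvd_double by (rule mult_dvd_mono[OF dvd_refl])
  then have "q * gap_factor q dvd 2*n*q^2" by (rule dvd_trans) (simp add: power2_eq_square)
  moreover have "q * gap_factor q dvd q * (m * (2*p + q*m))"
    using gap_factor_dvd_quadratic[OF assms] by (rule mult_dvd_mono[OF dvd_refl])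
  moreover have "2*n*q^2 - (p + m*q)^2 - (- (p^2)) = 2*n*q^2 - q * (m * (2*p + q*m))"
    by (simp add: power2_eq_square algebra_simps)
  ultimately show ?thesis unfolding cong_iff_dvd_diff by (metis dvd_diff)
qed

lemma exists_square_cong:
  fixes p q z :: int
  assumes "coprime p q" and "[z = (p^2)] (mod q * gap_factor q)"
  shows "\<exists>k. [(p + k*q)^2 = z] (mod 2*q^2)"
proof -
  obtain w where "z - p^2 = q * gap_factor q * w"
    using assms(2) unfolding cong_iff_dvd_diff by (elim dvdE)
  then have w: "z = p^2 + q * (gap_factor q * w)" by (simp add: algebra_simps)
  obtain k where "[k * (2*p + q*k) = gap_factor q * w] (mod 2*q)"
    using gap_factor_quadratic_cong_solvable[OF assms(1)] by blast
  then have "[q * (k * (2*p + q*k)) = q * (gap_factor q * w)] (mod q * (2*q))"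
    by (rule cong_cmult_leftI)
  moreover have "q * (2*q) = 2*q^2" by (simp add: power2_eq_square)
  ultimately have "[p^2 + q * (k * (2*p + q*k)) = z] (mod 2*q^2)"
    unfolding w by (simp only: cong_add_lcancel)
  moreover have "(p + k*q)^2 = p^2 + q * (k * (2*p + q*k))" by (simp add: power2_eq_square algebra_simps)
  ultimately have "[(p + k*q)^2 = z] (mod 2*q^2)" by (simp only:)
  then show ?thesis by blast
qed

lemma q_gap_factor_not_dvd_square:
  fixes p q :: int
  assumes "coprime p q" and "2 \<le> q"
  shows "\<not> q * gap_factor q dvd p^2"
proof
  assume "q * gap_factor q dvd p^2"
  then have "q dvd p^2" by (rule dvd_mult_left)
  then have "is_unit q" using assms(1) coprime_common_divisor[of "p^2" q q] by simp
  with assms(2) show False by simp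
qed

lemma exists_cong_in_window:
  fixes a R M :: int
  assumes "0 < M"
  shows "\<exists>r. [r = a] (mod M) \<and> R - M < r \<and> r \<le> R"
proof (intro exI conjI)
  have "R - (R - a) mod M - a = M * ((R - a) div M)"
    using minus_mod_eq_mult_div[of "R - a" M] by linarith
  then show "[R - (R - a) mod M = a] (mod M)"
    unfolding cong_iff_dvd_diff by (metis dvd_triv_left)
  show "R - M < R - (R - a) mod M" "R - (R - a) mod M \<le> R"
    using pos_mod_bound[OF assms] pos_mod_sign[OF assms] by (simp_all add: algebra_simps)
qed

lemma exists_square_cong_in_window:
  fixes p q z R :: int
  assumes "coprime p q" and "q \<noteq> 0" and "[z = (p^2)] (mod q * gap_factor q)"
  shows "\<exists>k. [(p + k*q)^2 = z] (mod 2*q^2) \<and> R - 2*q^2 < p + k*q \<and> p + k*q \<le> R"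
proof -
  obtain k0 where k0: "[(p + k0*q)^2 = z] (mod 2*q^2)"
    using exists_square_cong[OF assms(1,3)] by blast
  obtain r where r: "[r = p + k0*q] (mod 2*q^2)" "R - 2*q^2 < r" "r \<le> R"
    using exists_cong_in_window[of "2*q^2"] assms(2) by auto
  have "[r = p + k0*q] (mod q)" by (rule cong_dvd_modulus[OF r(1)]) (simp add: power2_eq_square)
  then have "q dvd (r - (p + k0*q)) + k0*q" unfolding cong_iff_dvd_diff by (rule dvd_add) simp
  then have "q dvd r - p" by simp
  then obtain k where "r - p = q * k" by (elim dvdE)
  then have k: "r = p + k*q" by (simp add: algebra_simps)
  have "[r^2 = z] (mod 2*q^2)" using cong_pow[OF r(1)] k0 by (rule cong_trans)
  then show ?thesis using r(2,3) k by blast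
qed

lemma mod_le_of_cong:
  fixes a b M :: int
  assumes "[a = b] (mod M)" and "0 \<le> a"
  shows "b mod M \<le> a"
proof -
  have "b mod M = a mod M" using assms(1)[unfolded Cong.cong_def] by simp
  also have "\<dots> \<le> a" by (rule zmod_le_nonneg_dividend[OF assms(2)])
  finally show ?thesis .
qed

lemma sqrt_square_add_minus:
  fixes r d :: real
  assumes "1 \<le> r" and "\<bar>d\<bar> \<le> 2*r - 1"
  shows "sgn (sqrt (r^2 + d) - r) = sgn d"
    and "\<bar>sqrt (r^2 + d) - r\<bar> \<le> \<bar>d\<bar> / (2*r - 1)"
proof -
  define s where "s = sqrt (r^2 + d)"
  have "(r - 1)^2 \<le> r^2 + d" using assms by (simp add: power2_eq_square algebra_simps)
  then have "r - 1 \<le> s" and s2: "s^2 = r^2 + d"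
    using assms(1) unfolding s_def by (auto intro: real_le_rsqrt order_trans[OF zero_le_power2])
  then have pos: "0 < 2*r - 1" "2*r - 1 \<le> s + r" using assms(1) by linarith+
  have "(s - r) * (s + r) = d" using s2 by (simp add: power2_eq_square algebra_simps)
  then have eq: "s - r = d / (s + r)" using pos by (simp add: field_simps)
  show "sgn (sqrt (r^2 + d) - r) = sgn d" using pos unfolding s_def[symmetric] eq by (simp add: sgn_divide)
  show "\<bar>sqrt (r^2 + d) - r\<bar> \<le> \<bar>d\<bar> / (2*r - 1)"
    using pos unfolding s_def[symmetric] eq by (simp add: abs_divide divide_left_mono)
qed

lemma dist_Ints_frac_ge:
  fixes m :: real and q r :: int
  assumes "m \<in> \<int>" and "0 < q" and "\<not> q dvd r"
  shows "1 / q \<le> \<bar>m - r / q\<bar>"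
proof -
  obtain i where m: "m = of_int i" using assms(1) Ints_cases by blast
  have "q * i - r \<noteq> 0" using assms(3) by (metis dvd_triv_left eq_iff_diff_eq_0)
  then have "1 \<le> \<bar>real_of_int (q * i - r)\<bar>" by linarith
  also have "\<dots> = q * \<bar>m - r / q\<bar>"
    using assms(2) unfolding m by (simp add: field_simps abs_mult)
  finally show ?thesis using assms(2) by (simp add: divide_simps mult.commute)
qed

lemma dist_ge_of_square_dist_ge:
  fixes t c s B K :: real
  assumes "1 \<le> t" and "t \<le> s" and "0 < B" and "K \<le> B * (2*s + 1)"
    and "0 < t + c \<Longrightarrow> K \<le> B * \<bar>t^2 - c^2\<bar>"
  shows "K / (B * (2*s + 1)) \<le> \<bar>t - c\<bar>"
proof -
  have D: "0 < B * (2*s + 1)" using assms(1-3) by simp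
  show ?thesis
  proof (cases "\<bar>t - c\<bar> < 1")
    case True
    then have "0 < t + c" "t + c \<le> 2*s + 1" using assms(1,2) by linarith+
    then have "\<bar>t^2 - c^2\<bar> \<le> (2*s + 1) * \<bar>t - c\<bar>"
      by (simp add: power2_eq_square square_diff_square_factored abs_mult mult_right_mono)
    then have "B * \<bar>t^2 - c^2\<bar> \<le> B * (2*s + 1) * \<bar>t - c\<bar>"
      using assms(3) by (simp add: mult.assoc)
    with assms(5)[OF \<open>0 < t + c\<close>] show ?thesis using D by (simp add: divide_simps mult.commute)
  next
    case False
    have "K / (B * (2*s + 1)) \<le> 1" using assms(4) D by simp
    then show ?thesis using False by linarith
  qed
qed

lemma gap_bounds:
  fixes x a b a' b' y1 y2 :: real and A :: "real set"
  assumes "\<And>y. y \<in> A \<Longrightarrow> x < y \<Longrightarrow> a \<le> y - x"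
    and "\<And>y. y \<in> A \<Longrightarrow> y < x \<Longrightarrow> b \<le> x - y"
    and "y1 \<in> A" "x < y1" "y1 - x \<le> a'"
    and "y2 \<in> A" "y2 < x" "x - y2 \<le> b'"
  shows "a + b \<le> gap x A" and "gap x A \<le> a' + b'"
proof -
  define Above where "Above = {y \<in> A. y > x}"
  define Below where "Below = {y \<in> A. y < x}"
  have ne: "Above \<noteq> {}" "Below \<noteq> {}"
    using assms(3,4,6,7) unfolding Above_def Below_def by blast+
  have bdd: "bdd_below Above" "bdd_above Below"
    unfolding Above_def Below_def by (auto intro: bdd_belowI[of _ x] bdd_aboveI[of _ x])
  have "x + a \<le> Inf Above"
    using ne(1) by (rule cInf_greatest) (use assms(1) in \<open>force simp: Above_def\<close>)
  moreover have "Sup Below \<le> x - b"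
    using ne(2) by (rule cSup_least) (use assms(2) in \<open>force simp: Below_def\<close>)
  moreover have "Inf Above \<le> y1" using bdd(1) assms(3,4) unfolding Above_def by (intro cInf_lower) auto
  moreover have "y2 \<le> Sup Below" using bdd(2) assms(6,7) unfolding Below_def by (intro cSup_upper) auto
  moreover have "gap x A = Inf Above - Sup Below" unfolding gap_def Above_def Below_def ..
  ultimately show "a + b \<le> gap x A" and "gap x A \<le> a' + b'" using assms(5,8) by linarith+
qed

lemma f2_elemE:
  fixes p q :: int and N :: nat and y :: real
  assumes "coprime p q" and "q \<noteq> 0" and "y \<in> f2 N"
  obtains t c :: real and a :: int
  where "1 \<le> t" "t \<le> sqrt N" "y - p / q = t - c" "real_of_int a = q^2 * (t^2 - c^2)"
    and "[a = - (p^2)] (mod q * gap_factor q)"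
proof -
  obtain n :: nat where n: "1 \<le> n" "2 * n \<le> N" and "y - sqrt (2 * n) \<in> \<int>"
    using assms(3) unfolding f2_def by blast
  then obtain j where j: "y - sqrt (2 * n) = of_int j" by (elim Ints_cases)
  define t where "t = sqrt (2 * n)"
  define c where "c = (p - j * q) / q"
  define a where "a = 2 * int n * q^2 - (p - j * q)^2"
  show thesis
  proof
    show "1 \<le> t" "t \<le> sqrt N" using n unfolding t_def by simp_all
    show "y - p / q = t - c" using j assms(2) unfolding t_def c_def by (simp add: field_simps)
    show "real_of_int a = q^2 * (t^2 - c^2)"
      using assms(2) unfolding a_def t_def c_def by (simp add: field_simps)
    show "[a = - (p^2)] (mod q * gap_factor q)"
      using diff_square_cong_mod_q_gap_factor[OF assms(1), of "int n" "- j"] unfolding a_def by simp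
  qed
qed

lemma q_gap_factor_le_denominator:
  fixes q :: int and s :: real
  assumes "2 \<le> q" and "1 \<le> s"
  shows "q * gap_factor q \<le> q^2 * (2 * s + 1)"
proof -
  have "q * gap_factor q \<le> 4 * q" using q_gap_factor_bounds(2) assms(1) by simp
  also have "\<dots> \<le> 2 * q^2" using assms(1) by (simp add: power2_eq_square)
  finally have "real_of_int (q * gap_factor q) \<le> 2 * q^2" by linarith
  also have "\<dots> \<le> q^2 * (2 * s + 1)"
    using assms(2) mult_left_mono[of 2 "2 * s + 1" "q^2"] by (simp add: mult.commute)
  finally show ?thesis .
qed

lemma f2_above_frac_lower:
  fixes p q :: int and N :: nat and y :: real
  assumes "coprime p q" and "2 \<le> q" and "y \<in> f2 N" and "p / q < y"
  shows "((- (p^2)) mod (q * gap_factor q)) / (q^2 * (2 * sqrt N + 1)) \<le> y - p / q"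
proof -
  have "q \<noteq> 0" using assms(2) by simp
  obtain t c :: real and a :: int where t: "1 \<le> t" "t \<le> sqrt N" and yx: "y - p / q = t - c"
    and a: "real_of_int a = q^2 * (t^2 - c^2)" and a_cong: "[a = - (p^2)] (mod q * gap_factor q)"
    by (rule f2_elemE[OF assms(1) \<open>q \<noteq> 0\<close> assms(3)])
  define M where "M = q * gap_factor q"
  have M_pos: "0 < M" using q_gap_factor_bounds assms(2) unfolding M_def by simp
  have q2_pos: "0 < real_of_int (q^2)" using assms(2) by simp
  have "c < t" using yx assms(4) by simp
  have "(- (p^2)) mod M \<le> q^2 * \<bar>t^2 - c^2\<bar>" if "0 < t + c"
  proof -
    have "0 < (t - c) * (t + c)" using \<open>c < t\<close> that by simp
    also have "\<dots> = t^2 - c^2" by (simp add: power2_eq_square algebra_simps)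
    finally have "0 < t^2 - c^2" .
    then have "0 < real_of_int a" unfolding a using q2_pos by simp
    then have "(- (p^2)) mod M \<le> a" using a_cong unfolding M_def by (simp add: mod_le_of_cong)
    then have "real_of_int ((- (p^2)) mod M) \<le> of_int a" by linarith
    then show ?thesis using a \<open>0 < t^2 - c^2\<close> by simp
  qed
  moreover have "real_of_int ((- (p^2)) mod M) \<le> q^2 * (2 * sqrt N + 1)"
    using q_gap_factor_le_denominator[OF assms(2), of "sqrt N"] t pos_mod_bound[OF M_pos, of "- (p^2)"]
    unfolding M_def by linarith
  ultimately have "((- (p^2)) mod M) / (q^2 * (2 * sqrt N + 1)) \<le> \<bar>t - c\<bar>"
    by (intro dist_ge_of_square_dist_ge[OF t q2_pos])
  then show ?thesis using yx \<open>c < t\<close> unfolding M_def by simp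
qed

lemma f2_below_frac_lower:
  fixes p q :: int and N :: nat and y :: real
  assumes "coprime p q" and "2 \<le> q" and "y \<in> f2 N" and "y < p / q"
  shows "(p^2 mod (q * gap_factor q)) / (q^2 * (2 * sqrt N + 1)) \<le> p / q - y"
proof -
  have "q \<noteq> 0" using assms(2) by simp
  obtain t c :: real and a :: int where t: "1 \<le> t" "t \<le> sqrt N" and yx: "y - p / q = t - c"
    and a: "real_of_int a = q^2 * (t^2 - c^2)" and a_cong: "[a = - (p^2)] (mod q * gap_factor q)"
    by (rule f2_elemE[OF assms(1) \<open>q \<noteq> 0\<close> assms(3)])
  define M where "M = q * gap_factor q"
  have M_pos: "0 < M" using q_gap_factor_bounds assms(2) unfolding M_def by simp
  have q2_pos: "0 < real_of_int (q^2)" using assms(2) by simp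
  have "t < c" using yx assms(4) by simp
  have "p^2 mod M \<le> q^2 * \<bar>t^2 - c^2\<bar>" if "0 < t + c"
  proof -
    have "0 < (c - t) * (c + t)" using \<open>t < c\<close> that by simp
    also have "\<dots> = c^2 - t^2" by (simp add: power2_eq_square algebra_simps)
    finally have "0 < c^2 - t^2" .
    then have "real_of_int a < 0" unfolding a using q2_pos by (simp add: mult_pos_neg)
    moreover have "[- a = p^2] (mod M)"
      using a_cong unfolding M_def by (metis cong_minus_minus_iff minus_minus)
    ultimately have "p^2 mod M \<le> - a" by (simp add: mod_le_of_cong)
    then have "real_of_int (p^2 mod M) \<le> - of_int a" by linarith
    also have "\<dots> = q^2 * (c^2 - t^2)" unfolding a by (simp add: algebra_simps)
    finally show ?thesis using \<open>0 < c^2 - t^2\<close> by simp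
  qed
  moreover have "real_of_int (p^2 mod M) \<le> q^2 * (2 * sqrt N + 1)"
    using q_gap_factor_le_denominator[OF assms(2), of "sqrt N"] t pos_mod_bound[OF M_pos, of "p^2"]
    unfolding M_def by linarith
  ultimately have "(p^2 mod M) / (q^2 * (2 * sqrt N + 1)) \<le> \<bar>t - c\<bar>"
    by (intro dist_ge_of_square_dist_ge[OF t q2_pos])
  then show ?thesis using yx \<open>t < c\<close> unfolding M_def by simp
qed

lemma square_add_le_square:
  fixes r d X :: real
  assumes "1 \<le> r" and "r \<le> X - 1" and "d < r"
  shows "r^2 + d \<le> X^2"
proof -
  have "r^2 + d < r * (r + 1)" using assms(3) by (simp add: power2_eq_square algebra_simps)
  also have "\<dots> \<le> (X - 1) * X" using assms(1,2) by (intro mult_mono) simp_all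
  also have "\<dots> \<le> X^2" using assms(1,2) by (simp add: power2_eq_square algebra_simps)
  finally show ?thesis by simp
qed

lemma square_add_cong_0E:
  fixes r d q :: int
  assumes "[r^2 + d = 0] (mod 2*q^2)" and "\<bar>d\<bar> < r" and "q \<noteq> 0"
  obtains n :: nat where "1 \<le> n" and "q^2 * real (2*n) = r^2 + d"
proof -
  obtain n' where n': "r^2 + d = 2*q^2 * n'" using assms(1) unfolding cong_0_iff by (elim dvdE)
  have "1 \<le> r" using assms(2) by linarith
  then have "r \<le> r^2" by (simp add: power2_eq_square)
  then have "0 < 2*q^2 * n'" using assms(2) unfolding n'[symmetric] by linarith
  then have "0 < n'" using assms(3) by (simp add: zero_less_mult_iff)
  show thesis
  proof
    show "1 \<le> nat n'" using \<open>0 < n'\<close> by simp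
    show "q^2 * real (2 * nat n') = r^2 + d" using n' \<open>0 < n'\<close> by (simp add: algebra_simps)
  qed
qed

lemma exists_f2_near_frac_of_cong:
  fixes p q k d :: int and N :: nat
  assumes "coprime p q" and "2 \<le> q" and "[(p + k*q)^2 + d = 0] (mod 2*q^2)"
    and "\<bar>d\<bar> < p + k*q" and "p + k*q \<le> q * sqrt N - 1"
  shows "\<exists>y\<in>f2 N. sgn (y - p / q) = sgn (real_of_int d) \<and>
    \<bar>y - p / q\<bar> \<le> \<bar>d\<bar> / (q * (2 * (p + k*q) - 1))"
proof -
  define r where "r = p + k*q"
  have q: "real_of_int q \<ge> 2" using assms(2) by simp
  have "\<bar>d\<bar> < r" using assms(4) unfolding r_def .
  then have d_lt: "\<bar>real_of_int d\<bar> < real_of_int r" and r1: "1 \<le> real_of_int r" by linarith+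
  then have d: "\<bar>real_of_int d\<bar> \<le> 2 * real_of_int r - 1" "\<bar>real_of_int d\<bar> < 2 * real_of_int r - 1"
    by linarith+
  obtain n where n1: "1 \<le> n" and n_real: "q^2 * real (2*n) = r^2 + d"
    using square_add_cong_0E[of r d q] assms(2,3) \<open>\<bar>d\<bar> < r\<close> unfolding r_def by auto
  define t where "t = sqrt (2*n)"
  have "q * t = sqrt (r^2 + d)" unfolding t_def n_real[symmetric] using q by (simp add: real_sqrt_mult)
  then have tc: "t - r / q = (sqrt (r^2 + d) - r) / q" using q by (simp add: field_simps)
  have sgn: "sgn (t - r / q) = sgn (real_of_int d)"
    unfolding tc using sqrt_square_add_minus(1)[OF r1 d(1)] q by (simp add: sgn_divide)
  have close: "\<bar>t - r / q\<bar> \<le> \<bar>d\<bar> / (q * (2 * real_of_int r - 1))"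
    unfolding tc abs_divide using divide_right_mono[OF sqrt_square_add_minus(2)[OF r1 d(1)], of "\<bar>q\<bar>"] q
    by (simp add: divide_divide_eq_left mult.commute)
  also have "\<dots> < 1 / q"
    using mult_strict_left_mono[OF d(2), of q] q r1 by (simp add: divide_simps algebra_simps)
  finally have "\<bar>t - r / q\<bar> < 1 / q" .
  moreover have "\<not> q dvd r"
  proof
    assume "q dvd r"
    then have "q dvd p" unfolding r_def by (simp add: dvd_add_left_iff)
    then show False using assms(1,2) coprime_common_divisor[of p q q] by simp
  qed
  ultimately have "t \<notin> \<int>" using dist_Ints_frac_ge[of t q r] assms(2) by force
  then have t_not_nat: "t \<notin> \<nat>" using Nats_subset_Ints by blast
  have "q^2 * real (2*n) \<le> (q * sqrt N)^2"
    unfolding n_real using square_add_le_square[OF r1 _ ] d_lt assms(5) unfolding r_def by simp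
  then have n2: "2*n \<le> N" using q by (simp add: power_mult_distrib)
  have y: "t - k \<in> f2 N" using n1 n2 t_not_nat unfolding f2_def t_def by force
  have yx: "t - k - p / q = t - r / q" using q unfolding r_def by (simp add: field_simps)
  have den: "real_of_int (q * (2 * (p + k*q) - 1)) = q * (2 * real_of_int r - 1)" unfolding r_def by simp
  have "sgn (t - k - p / q) = sgn (real_of_int d) \<and>
      \<bar>t - k - p / q\<bar> \<le> \<bar>d\<bar> / real_of_int (q * (2 * (p + k*q) - 1))"
    unfolding yx den using sgn close by blast
  with y show ?thesis by blast
qed

lemma exists_f2_near_frac:
  fixes p q d :: int and N :: nat
  assumes "coprime p q" and "2 \<le> q" and "2*q^2 + 4*q + 3 \<le> q * sqrt N"
    and "[- d = p^2] (mod q * gap_factor q)" and "\<bar>d\<bar> < q * gap_factor q"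
  shows "\<exists>y\<in>f2 N. sgn (y - p / q) = sgn (real_of_int d) \<and>
    \<bar>y - p / q\<bar> \<le> \<bar>d\<bar> / (q * (2 * q * sqrt N - 4 * q^2 - 5))"
proof -
  define W where "W = 2 * q * sqrt N - 4 * q^2 - 5"
  define R where "R = \<lfloor>q * sqrt N\<rfloor> - 1"
  have q: "2 \<le> real_of_int q" using assms(2) by simp
  obtain k where k: "[(p + k*q)^2 = - d] (mod 2*q^2)" "R - 2*q^2 < p + k*q" "p + k*q \<le> R"
    using exists_square_cong_in_window[OF assms(1) _ assms(4)] assms(2) by auto
  have "[(p + k*q)^2 + d = - d + d] (mod 2*q^2)" using k(1) by (rule cong_add) simp
  then have cong: "[(p + k*q)^2 + d = 0] (mod 2*q^2)" by simp
  have R: "q * sqrt N - 2 < R" "R \<le> q * sqrt N - 1" unfolding R_def by linarith+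
  have r_upper: "p + k*q \<le> q * sqrt N - 1" using k(3) R(2) by linarith
  have r_lower: "q * sqrt N - 2 - 2 * q^2 < p + k*q" using k(2) R(1) by linarith
  have "\<bar>d\<bar> < p + k*q" using assms(3,5) q_gap_factor_bounds[of q] assms(2) r_lower by linarith
  then obtain y where y: "y \<in> f2 N" "sgn (y - p / q) = sgn (real_of_int d)"
    "\<bar>y - p / q\<bar> \<le> \<bar>d\<bar> / (q * (2 * (p + k*q) - 1))"
    using exists_f2_near_frac_of_cong[OF assms(1,2) cong _ r_upper] by blast
  have "0 < W" using assms(3) q unfolding W_def by simp
  moreover have "W \<le> 2 * (p + k*q) - 1" using r_lower unfolding W_def by simp
  then have "real_of_int q * W \<le> q * (2 * (p + k*q) - 1)" using q by (simp add: mult_left_mono)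
  ultimately have "\<bar>d\<bar> / (q * (2 * (p + k*q) - 1)) \<le> \<bar>d\<bar> / (q * W)"
    using q by (intro divide_left_mono) simp_all
  then show ?thesis using y unfolding W_def by fastforce
qed

lemma gap_frac_bounds:
  fixes p q :: int and N :: nat
  assumes "coprime p q" and "2 \<le> q" and "2*q^2 + 4*q + 3 \<le> q * sqrt N"
  shows "gap_factor q / (q * (2 * sqrt N + 1)) \<le> gap (p / q) (f2 N)"
    and "gap (p / q) (f2 N) \<le> gap_factor q / (2 * q * sqrt N - 4 * q^2 - 5)"
proof -
  define M where "M = q * gap_factor q"
  define D where "D = q^2 * (2 * sqrt N + 1)"
  define W where "W = 2 * q * sqrt N - 4 * q^2 - 5"
  have q: "2 \<le> real_of_int q" using assms(2) by simp
  have M_pos: "0 < M" using q_gap_factor_bounds assms(2) unfolding M_def by simp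
  have "p^2 mod M \<noteq> 0"
    using q_gap_factor_not_dvd_square[OF assms(1,2)] unfolding M_def by (simp add: dvd_eq_mod_eq_0)
  then have residues: "(- (p^2)) mod M + p^2 mod M = M" "0 < (- (p^2)) mod M" "0 < p^2 mod M"
    using M_pos by (simp_all add: zmod_zminus1_eq_if order_le_neq_trans)
  have "[- ((- (p^2)) mod M) = p^2] (mod M)"
    by (metis cong_minus_minus_iff cong_mod_left cong_refl minus_minus)
  then obtain y1 where y1: "y1 \<in> f2 N" "p / q < y1" "y1 - p / q \<le> ((- (p^2)) mod M) / (q * W)"
    using exists_f2_near_frac[OF assms, of "(- (p^2)) mod M"] residues pos_mod_bound[OF M_pos]
    unfolding M_def W_def by (auto simp: sgn_if split: if_splits)
  have "[- (- (p^2 mod M)) = p^2] (mod M)" by simp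
  then obtain y2 where y2: "y2 \<in> f2 N" "y2 < p / q" "p / q - y2 \<le> (p^2 mod M) / (q * W)"
    using exists_f2_near_frac[OF assms, of "- (p^2 mod M)"] residues pos_mod_bound[OF M_pos]
    unfolding M_def W_def by (auto simp: sgn_if split: if_splits)
  have bounds: "((- (p^2)) mod M) / D + (p^2 mod M) / D \<le> gap (p / q) (f2 N)"
    "gap (p / q) (f2 N) \<le> ((- (p^2)) mod M) / (q * W) + (p^2 mod M) / (q * W)"
    using gap_bounds[OF _ _ y1 y2] f2_above_frac_lower[OF assms(1,2)] f2_below_frac_lower[OF assms(1,2)]
    unfolding D_def M_def by blast+
  have sum: "real_of_int ((- (p^2)) mod M) + real_of_int (p^2 mod M) = q * gap_factor q"
    using residues(1) unfolding M_def by (metis of_int_add of_int_mult)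
  have "((- (p^2)) mod M) / D + (p^2 mod M) / D = gap_factor q / (q * (2 * sqrt N + 1))"
    unfolding add_divide_distrib[symmetric] sum D_def using q
    by (simp add: power2_eq_square mult.assoc mult_divide_mult_cancel_left)
  moreover have "((- (p^2)) mod M) / (q * W) + (p^2 mod M) / (q * W) = gap_factor q / W"
    unfolding add_divide_distrib[symmetric] sum using q by simp
  ultimately show "gap_factor q / (q * (2 * sqrt N + 1)) \<le> gap (p / q) (f2 N)"
    and "gap (p / q) (f2 N) \<le> gap_factor q / (2 * q * sqrt N - 4 * q^2 - 5)"
    using bounds unfolding W_def by simp_all
qed

theorem mainTheorem2:
  fixes p q :: int
  assumes "coprime p q" and "q \<ge> 2"
  shows "(\<lambda>N::nat. 2 * sqrt (real N) * gap (real_of_int p / real_of_int q) (f2 N))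
           \<longlonglongrightarrow> (if q mod 4 = 2 then 4 / real_of_int q
                else if q mod 4 = 0 then 2 / real_of_int q
                else 1 / real_of_int q)"
proof -
  define l where "l = real_of_int (gap_factor q)"
  have q: "0 < real_of_int q" using assms(2) by simp
  have large: "\<forall>\<^sub>F N in sequentially. real_of_int (2*q^2 + 4*q + 3) \<le> q * sqrt (real N)"
    using q by real_asymp
  have lower: "\<forall>\<^sub>F N in sequentially. 2 * sqrt (real N) * (l / (q * (2 * sqrt N + 1)))
      \<le> 2 * sqrt (real N) * gap (p / q) (f2 N)"
    using large
    by eventually_elim (unfold l_def, rule mult_left_mono[OF gap_frac_bounds(1)[OF assms]], simp_all)
  have upper: "\<forall>\<^sub>F N in sequentially. 2 * sqrt (real N) * gap (p / q) (f2 N)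
      \<le> 2 * sqrt (real N) * (l / (2 * q * sqrt N - 4 * q^2 - 5))"
    using large
    by eventually_elim (unfold l_def, rule mult_left_mono[OF gap_frac_bounds(2)[OF assms]], simp_all)
  have "(\<lambda>N. 2 * sqrt (real N) * (l / (q * (2 * sqrt N + 1)))) \<longlonglongrightarrow> l * inverse q"
    using q by real_asymp
  moreover have "(\<lambda>N. 2 * sqrt (real N) * (l / (2 * q * sqrt N - 4 * q^2 - 5))) \<longlonglongrightarrow> l * inverse q"
    using q by real_asymp
  moreover have "(if q mod 4 = 2 then 4 / real_of_int q
                else if q mod 4 = 0 then 2 / real_of_int q
                else 1 / real_of_int q) = l * inverse q"
    unfolding l_def gap_factor_def by (simp add: divide_inverse)
  ultimately show ?thesis using lower upper by (auto intro: tendsto_sandwich)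
qed

end
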